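(* Let $k\geq1$ and let $w$ be a reduced word on $\{\alpha_k^{\pm1},\dots,\alpha_1^{\pm1},\beta^{\pm1}\}$. For every finite subset $F$ of the vertex set $X$ of the pre-graph $G_0$, there is an extension $G$ of $G_0$ (with labels in $\{\alpha_k^{\pm1},\dots,\alpha_1^{\pm1},\beta^{\pm1}\}$) such that the path $P(w,v_0)$ embeds in $G$, the image of $P(w,v_0)$ in $G$ contains no vertex of $F$, and $G\setminus G_0$ (the set of edges of $G$ not in $G_0$) is finite.
   Context: A graph consists of a vertex set $V$, an edge set $E$, a fixed-point-free involution $e\mapsto\bar e$ on $E$, and maps $i,t:E\to V$ (initial and terminal vertex) with $i(\bar e)=t(e)$. A labeling on $S^{\pm1}=S\cup S^{-1}$ is a map $l:E\to S^{\pm1}$ with $l(\bar e)=l(e)^{-1}$. A labeled graph is well-labeled if $i(e)=i(e')$ and $l(e)=l(e')$ imply $e=e'$. A homomorphism of labeled graphs maps vertices to vertices and edges to edges, preserving $i$, $t$ and labels; an embedding is an injective homomorphism. A word $w_m\cdots w_1$ is reduced if $w_{j+1}\neq w_j^{-1}$ for all $j$. For a reduced word $w=w_m\cdots w_1$, the path $P(w,v_0)$ is the labeled graph with $m+1$ distinct vertices $v_0,v_1,\dots,v_m$ and directed edges $e_1,\dots,e_m$ (together with their inverses) where $e_j$ goes from $v_{j-1}$ to $v_j$ and has label $w_j$. Let $X$ be an infinite countable set and $\beta$ a permutation of $X$ acting simply transitively (so $X\cong\mathbb{Z}$ and $\beta$ is $x\mapsto x+1$). The pre-graph $G_0$ has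 vertex set $X$ and, for each $x\in X$, one directed edge from $x$ to $\beta(x)$ labeled $\beta$ (together with its inverse edge, labeled $\beta^{-1}$). An extension of $G_0$ is a well-labeled graph labeled on $\{\alpha_k^{\pm1},\dots,\alpha_1^{\pm1},\beta^{\pm1}\}$ which contains $G_0$ and has vertex set exactly $X$. *)

theory Defs
  imports Main
begin

text \<open>Letters: a letter is a pair (i, s). Index 0 stands for beta, index i (1 \<le> i \<le> k)
  stands for alpha_i; s = True means exponent +1, s = False exponent -1.\<close>
type_synonym letter = "nat \<times> bool"

definition linv :: "letter \<Rightarrow> letter" where
  "linv a = (fst a, \<not> snd a)"

definition beta :: letter where "beta = (0, True)"

definition alphabet :: "nat \<Rightarrow> letter set" where
  "alphabet k = {a. fst a \<le> k}"

record ('v, 'e) lgraph =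
  verts :: "'v set"
  edges :: "'e set"
  bar :: "'e \<Rightarrow> 'e"
  ini :: "'e \<Rightarrow> 'v"
  ter :: "'e \<Rightarrow> 'v"
  lab :: "'e \<Rightarrow> letter"

definition is_graph :: "('v, 'e) lgraph \<Rightarrow> bool" where
  "is_graph G \<longleftrightarrow>
     (\<forall>e \<in> edges G. ini G e \<in> verts G \<and> ter G e \<in> verts G \<and> bar G e \<in> edges G
        \<and> bar G (bar G e) = e \<and> bar G e \<noteq> e \<and> ini G (bar G e) = ter G e)"

definition labeled_on :: "letter set \<Rightarrow> ('v, 'e) lgraph \<Rightarrow> bool" where
  "labeled_on S G \<longleftrightarrow> is_graph G \<and>
     (\<forall>e \<in> edges G. lab G e \<in> S \<and> lab G (bar G e) = linv (lab G e))"

definition well_labeled :: "('v, 'e) lgraph \<Rightarrow> bool" where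
  "well_labeled G \<longleftrightarrow>
     (\<forall>e \<in> edges G. \<forall>e' \<in> edges G. ini G e = ini G e' \<and> lab G e = lab G e' \<longrightarrow> e = e')"

definition homomorphism ::
  "('v, 'e) lgraph \<Rightarrow> ('w, 'f) lgraph \<Rightarrow> ('v \<Rightarrow> 'w) \<Rightarrow> ('e \<Rightarrow> 'f) \<Rightarrow> bool" where
  "homomorphism A B fv fe \<longleftrightarrow>
     fv ` verts A \<subseteq> verts B \<and> fe ` edges A \<subseteq> edges B \<and>
     (\<forall>e \<in> edges A. ini B (fe e) = fv (ini A e) \<and> ter B (fe e) = fv (ter A e)
        \<and> lab B (fe e) = lab A e)"

definition embedding ::
  "('v, 'e) lgraph \<Rightarrow> ('w, 'f) lgraph \<Rightarrow> ('v \<Rightarrow> 'w) \<Rightarrow> ('e \<Rightarrow> 'f) \<Rightarrow> bool" where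
  "embedding A B fv fe \<longleftrightarrow>
     homomorphism A B fv fe \<and> inj_on fv (verts A) \<and> inj_on fe (edges A)"

definition subgraph :: "('v, 'e) lgraph \<Rightarrow> ('v, 'e) lgraph \<Rightarrow> bool" where
  "subgraph A B \<longleftrightarrow> verts A \<subseteq> verts B \<and> edges A \<subseteq> edges B \<and>
     (\<forall>e \<in> edges A. bar B e = bar A e \<and> ini B e = ini A e \<and> ter B e = ter A e
        \<and> lab B e = lab A e)"

text \<open>Words: a word w = w_m ... w_1 is the list [w_m, ..., w_1] (written order);
  its j-th letter w_j (1 \<le> j \<le> m) is ws ! (m - j).\<close>
definition wletter :: "letter list \<Rightarrow> nat \<Rightarrow> letter" where
  "wletter ws j = ws ! (length ws - j)"

definition reduced_word :: "nat \<Rightarrow> letter list \<Rightarrow> bool" where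
  "reduced_word k ws \<longleftrightarrow> set ws \<subseteq> alphabet k \<and>
     (\<forall>j. 1 \<le> j \<and> j < length ws \<longrightarrow> wletter ws (j + 1) \<noteq> linv (wletter ws j))"

text \<open>The path P(w, v_0): vertices v_0..v_m are 0..m; edge (j, True) is e_j from v_{j-1}
  to v_j labeled w_j, edge (j, False) is its inverse.\<close>
definition path_graph :: "letter list \<Rightarrow> (nat, nat \<times> bool) lgraph" where
  "path_graph ws = \<lparr> verts = {0..length ws},
     edges = {(j, b). 1 \<le> j \<and> j \<le> length ws},
     bar = (\<lambda>(j, b). (j, \<not> b)),
     ini = (\<lambda>(j, b). if b then j - 1 else j),
     ter = (\<lambda>(j, b). if b then j else j - 1),
     lab = (\<lambda>(j, b). if b then wletter ws j else linv (wletter ws j)) \<rparr>"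

text \<open>X = int, beta acts as x \<mapsto> x + 1. Edges of extensions are named by elements of
  int \<times> letter \<times> int (a countably infinite type, so no generality is lost); the
  pre-graph edges are (x, beta, x+1) and their inverses (x+1, beta^-1, x).\<close>
type_synonym edge = "int \<times> letter \<times> int"

definition G0 :: "(int, edge) lgraph" where
  "G0 = \<lparr> verts = UNIV,
     edges = {(x, beta, x + 1) | x. True} \<union> {(x + 1, linv beta, x) | x. True},
     bar = (\<lambda>(x, a, y). (y, linv a, x)),
     ini = (\<lambda>(x, a, y). x),
     ter = (\<lambda>(x, a, y). y),
     lab = (\<lambda>(x, a, y). a) \<rparr>"

definition extension :: "nat \<Rightarrow> (int, edge) lgraph \<Rightarrow> bool" where
  "extension k G \<longleftrightarrow> labeled_on (alphabet k) G \<and> well_labeled G \<and> subgraph G0 G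
     \<and> verts G = UNIV"

end

theory Submission
  imports Defs
begin

text \<open>Gluing a finite well-labeled graph P into G0 along an injective vertex map
  yields a well-labeled graph as soon as every beta-edge of P goes to an edge
  x -> x + 1: the new beta-edges then coincide with old ones, and two new edges with
  equal initial vertex and label come from edges of P with the same property. The
  path P(w, v0) is well-labeled precisely because w is reduced. It is placed by a walk
  in the integers that moves by +-1 on beta-letters and jumps up by m + 1 on every
  alpha-letter, starting above F. A jump can never be undone by the at most m - 1
  remaining steps, and a run of beta-letters in a reduced word is monotone, so the
  walk is injective; it never descends by more than m, so it avoids F.\<close>

lemma linv_simps [simp]:
  "linv (linv a) = a" "linv a \<noteq> a" "a \<noteq> linv a" "linv a = b \<longleftrightarrow> a = linv b"
  by (auto simp: linv_def prod_eq_iff)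

lemma beta_in_alphabet [simp]: "beta \<in> alphabet k" "linv beta \<in> alphabet k"
  by (simp_all add: alphabet_def beta_def linv_def)

definition image_edge :: "('v, 'e) lgraph \<Rightarrow> ('v \<Rightarrow> int) \<Rightarrow> 'e \<Rightarrow> edge" where
  "image_edge P fv e = (fv (ini P e), lab P e, fv (ter P e))"

definition attach :: "('v, 'e) lgraph \<Rightarrow> ('v \<Rightarrow> int) \<Rightarrow> (int, edge) lgraph" where
  "attach P fv = G0\<lparr>edges := edges G0 \<union> image_edge P fv ` edges P\<rparr>"

definition beta_compatible :: "('v, 'e) lgraph \<Rightarrow> ('v \<Rightarrow> int) \<Rightarrow> bool" where
  "beta_compatible P fv \<longleftrightarrow>
     (\<forall>e \<in> edges P. lab P e = beta \<longrightarrow> fv (ter P e) = fv (ini P e) + 1)"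

lemma attach_simps [simp]:
  "verts (attach P fv) = UNIV"
  "edges (attach P fv) = edges G0 \<union> image_edge P fv ` edges P"
  "bar (attach P fv) = (\<lambda>(x, a, y). (y, linv a, x))"
  "ini (attach P fv) = (\<lambda>(x, a, y). x)"
  "ter (attach P fv) = (\<lambda>(x, a, y). y)"
  "lab (attach P fv) = (\<lambda>(x, a, y). a)"
  by (simp_all add: attach_def G0_def)

lemma edges_G0_iff:
  "(x, a, y) \<in> edges G0 \<longleftrightarrow> (a = beta \<and> y = x + 1) \<or> (a = linv beta \<and> x = y + 1)"
  by (auto simp: G0_def)

lemma labeled_on_bar:
  assumes "labeled_on S P" "e \<in> edges P"
  shows "bar P e \<in> edges P" "ini P (bar P e) = ter P e" "ter P (bar P e) = ini P e"
    "lab P (bar P e) = linv (lab P e)"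
  using assms unfolding labeled_on_def is_graph_def by metis+

lemma attach_labeled_on:
  assumes P: "labeled_on (alphabet k) P"
  shows "labeled_on (alphabet k) (attach P fv)"
proof -
  have rev: "(y, linv a, x) \<in> edges (attach P fv)"
    if e: "(x, a, y) \<in> edges (attach P fv)" for x a y
  proof (cases "(x, a, y) \<in> edges G0")
    case True
    then show ?thesis by (auto simp: edges_G0_iff)
  next
    case False
    then obtain d where d: "d \<in> edges P" "(x, a, y) = image_edge P fv d"
      using e by auto
    then have "(y, linv a, x) = image_edge P fv (bar P d)"
      using labeled_on_bar[OF P d(1)] d(2) by (simp add: image_edge_def)
    then show ?thesis using labeled_on_bar(1)[OF P d(1)] by simp
  qed
  have alph: "a \<in> alphabet k" if "(x, a, y) \<in> edges (attach P fv)" for x a y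
    using that P by (auto simp: edges_G0_iff image_edge_def labeled_on_def)
  have "bar (attach P fv) e \<in> edges (attach P fv) \<and> lab (attach P fv) e \<in> alphabet k"
    if "e \<in> edges (attach P fv)" for e
    using rev alph that by (cases e) (simp del: attach_simps(2))
  then show ?thesis
    unfolding labeled_on_def is_graph_def by (auto simp del: attach_simps(2) split: prod.splits)
qed

lemma attach_well_labeled:
  assumes P: "labeled_on S P" and wl: "well_labeled P"
    and inj: "inj_on fv (verts P)" and compat: "beta_compatible P fv"
  shows "well_labeled (attach P fv)"
proof -
  have beta_step: "(a = beta \<longrightarrow> y = x + 1) \<and> (a = linv beta \<longrightarrow> x = y + 1)"
    if "(x, a, y) \<in> edges (attach P fv)" for x a y
  proof -
    have "fv (ter P e) = fv (ini P e) + 1" if "e \<in> edges P" "lab P e = beta" for e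
      using compat that by (simp add: beta_compatible_def)
    moreover have "fv (ini P e) = fv (ter P e) + 1" if "e \<in> edges P" "lab P e = linv beta" for e
      using calculation[of "bar P e"] labeled_on_bar[OF P that(1)] that(2) by simp
    ultimately show ?thesis
      using that by (auto simp: edges_G0_iff image_edge_def)
  qed
  have ini_verts: "ini P e \<in> verts P" if "e \<in> edges P" for e
    using P that by (simp add: labeled_on_def is_graph_def)
  have same_target: "y = y'"
    if e: "(x, a, y) \<in> edges (attach P fv)" and e': "(x, a, y') \<in> edges (attach P fv)"
    for x a y y'
  proof (cases "a = beta \<or> a = linv beta")
    case True
    then show ?thesis using beta_step[OF e] beta_step[OF e'] by auto
  next
    case False
    then obtain d d' where d: "d \<in> edges P" "(x, a, y) = image_edge P fv d"
      and d': "d' \<in> edges P" "(x, a, y') = image_edge P fv d'"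
      using e e' by (auto simp: edges_G0_iff)
    then have "ini P d = ini P d'"
      using inj_onD[OF inj _ ini_verts ini_verts] by (simp add: image_edge_def)
    moreover have "lab P d = lab P d'" using d d' by (simp add: image_edge_def)
    ultimately have "d = d'" using wl d d' by (simp add: well_labeled_def)
    then show ?thesis using d d' by (simp add: image_edge_def)
  qed
  show ?thesis
    unfolding well_labeled_def
  proof (intro ballI impI)
    fix e e' assume "e \<in> edges (attach P fv)" "e' \<in> edges (attach P fv)"
      and "ini (attach P fv) e = ini (attach P fv) e' \<and> lab (attach P fv) e = lab (attach P fv) e'"
    moreover obtain x a y x' a' y' where "e = (x, a, y)" "e' = (x', a', y')"
      by (cases e; cases e') auto
    ultimately show "e = e'"
      using same_target[of x a y y'] by (simp del: attach_simps(2))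
  qed
qed

lemma attach_extension:
  assumes "labeled_on (alphabet k) P" "well_labeled P" "inj_on fv (verts P)" "beta_compatible P fv"
  shows "extension k (attach P fv)"
  using attach_labeled_on[OF assms(1)] attach_well_labeled[OF assms]
  unfolding extension_def subgraph_def by (simp add: G0_def)

lemma attach_embedding:
  assumes P: "labeled_on S P" and wl: "well_labeled P" and inj: "inj_on fv (verts P)"
  shows "embedding P (attach P fv) fv (image_edge P fv)"
proof -
  have "inj_on (image_edge P fv) (edges P)"
  proof (rule inj_onI)
    fix d d' assume d: "d \<in> edges P" "d' \<in> edges P" "image_edge P fv d = image_edge P fv d'"
    then have "ini P d = ini P d'"
      using inj_onD[OF inj] P by (simp add: image_edge_def labeled_on_def is_graph_def)
    with d wl show "d = d'" by (simp add: image_edge_def well_labeled_def)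
  qed
  then show ?thesis
    using inj by (auto simp: embedding_def homomorphism_def image_edge_def)
qed

lemma attach_finite_new_edges:
  "finite (edges P) \<Longrightarrow> finite (edges (attach P fv) - edges G0)"
  by (auto intro: finite_subset)

lemma path_graph_simps [simp]:
  "verts (path_graph ws) = {0..length ws}"
  "edges (path_graph ws) = {(j, b). 1 \<le> j \<and> j \<le> length ws}"
  by (simp_all add: path_graph_def)

lemma wletter_in_alphabet:
  "reduced_word k ws \<Longrightarrow> 1 \<le> j \<Longrightarrow> j \<le> length ws \<Longrightarrow> wletter ws j \<in> alphabet k"
  by (auto simp: reduced_word_def wletter_def)

lemma path_graph_labeled_on:
  assumes "reduced_word k ws"
  shows "labeled_on (alphabet k) (path_graph ws)"
  using wletter_in_alphabet[OF assms]
  by (auto simp: labeled_on_def is_graph_def path_graph_def alphabet_def linv_def)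

lemma path_graph_well_labeled:
  assumes red: "reduced_word k ws"
  shows "well_labeled (path_graph ws)"
proof -
  have no_backtrack: "wletter ws (j + 1) \<noteq> linv (wletter ws j)"
    if "1 \<le> j" "j < length ws" for j
    using red that by (simp add: reduced_word_def)
  have "(j, b) = (j', b')"
    if j: "1 \<le> j" "j \<le> length ws" and j': "1 \<le> j'" "j' \<le> length ws"
      and ini: "ini (path_graph ws) (j, b) = ini (path_graph ws) (j', b')"
      and lab: "lab (path_graph ws) (j, b) = lab (path_graph ws) (j', b')" for j b j' b'
  proof (cases "b = b'")
    case True
    then show ?thesis using ini j j' by (auto simp: path_graph_def split: if_splits)
  next
    case False
    have backtrack: False
      if "1 \<le> i" "i < length ws"
        "ini (path_graph ws) (i + 1, True) = ini (path_graph ws) (i, False)"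
        "lab (path_graph ws) (i + 1, True) = lab (path_graph ws) (i, False)" for i
      using that no_backtrack[of i] by (simp add: path_graph_def)
    from False consider "b" "\<not> b'" | "\<not> b" "b'" by auto
    then show ?thesis
    proof cases
      case 1
      then have "j = j' + 1" using ini j by (simp add: path_graph_def)
      then show ?thesis using 1 backtrack[of j'] ini lab j j' by simp
    next
      case 2
      then have "j' = j + 1" using ini j' by (simp add: path_graph_def)
      then show ?thesis using 2 backtrack[of j] ini lab j j' by simp
    qed
  qed
  then show ?thesis
    unfolding well_labeled_def by auto
qed

definition walk_step :: "nat \<Rightarrow> letter \<Rightarrow> int" where
  "walk_step m a = (if a = beta then 1 else if a = linv beta then -1 else int m + 1)"

fun walk :: "int \<Rightarrow> letter list \<Rightarrow> nat \<Rightarrow> int" where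
  "walk C ws 0 = C"
| "walk C ws (Suc j) = walk C ws j + walk_step (length ws) (wletter ws (Suc j))"

lemma finite_path_graph_edges: "finite (edges (path_graph ws))"
  by (rule finite_subset[of _ "{1..length ws} \<times> UNIV"]) auto

lemma walk_step_ge: "walk_step m a \<ge> -1"
  by (simp add: walk_step_def)

lemma walk_ge: "walk C ws j \<ge> C - int j"
proof (induction j)
  case (Suc j)
  then show ?case using walk_step_ge[of "length ws" "wletter ws (Suc j)"] by simp
qed simp

text \<open>Either the walk went straight up or down along a run of beta-letters, or it made
  an alpha-jump of length ws + 1, of which at most j - i - 1 unit descents undo part.\<close>

lemma walk_diff_cases:
  assumes red: "reduced_word k ws" and "i < j" "j \<le> length ws"
  shows "(walk C ws j - walk C ws i = int (j - i) \<and> wletter ws j = beta)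
       \<or> (walk C ws j - walk C ws i = - int (j - i) \<and> wletter ws j = linv beta)
       \<or> walk C ws j - walk C ws i \<ge> int (length ws) + 2 - int (j - i)"
  (is "?P j")
  using assms(2,3)
proof (induction j)
  case 0
  then show ?case by simp
next
  case (Suc j)
  let ?d = "walk C ws (Suc j) - walk C ws i" and ?a = "wletter ws (Suc j)"
  show ?case
  proof (cases "i = j")
    case True
    then show ?thesis by (auto simp: walk_step_def)
  next
    case False
    then have ij: "i < j" using Suc.prems by simp
    have no_backtrack: "?a \<noteq> linv (wletter ws j)"
      using red ij Suc.prems by (simp add: reduced_word_def)
    have d: "?d = (walk C ws j - walk C ws i) + walk_step (length ws) ?a"
      by simp
    have "?P j" using Suc.IH[OF ij] Suc.prems by simp
    moreover have len: "int (Suc j - i) = int (j - i) + 1" using ij by simp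
    ultimately show ?thesis
    proof (elim disjE conjE)
      assume "walk C ws j - walk C ws i = int (j - i)" "wletter ws j = beta"
      moreover have "?a \<noteq> linv beta" using no_backtrack \<open>wletter ws j = beta\<close> by simp
      ultimately show ?thesis using d len
        by (cases "?a = beta") (simp_all add: walk_step_def)
    next
      assume "walk C ws j - walk C ws i = - int (j - i)" "wletter ws j = linv beta"
      moreover have "?a \<noteq> beta" using no_backtrack \<open>wletter ws j = linv beta\<close> by auto
      ultimately show ?thesis using d len
        by (cases "?a = linv beta") (simp_all add: walk_step_def)
    next
      assume "walk C ws j - walk C ws i \<ge> int (length ws) + 2 - int (j - i)"
      then show ?thesis using d len walk_step_ge[of "length ws" ?a] by linarith
    qed
  qed
qed

lemma walk_inj_on:
  assumes "reduced_word k ws"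
  shows "inj_on (walk C ws) {0..length ws}"
proof -
  have "walk C ws j \<noteq> walk C ws i" if "i < j" "j \<le> length ws" for i j
    using walk_diff_cases[OF assms that, of C] that by auto
  then show ?thesis
    unfolding inj_on_def by (metis atLeastAtMost_iff linorder_neqE_nat)
qed

lemma walk_beta_compatible: "beta_compatible (path_graph ws) (walk C ws)"
proof -
  have "walk C ws j = walk C ws (j - 1) + walk_step (length ws) (wletter ws j)" if "1 \<le> j" for j
    using that walk.simps(2)[of C ws "j - 1"] by simp
  then show ?thesis
    by (auto simp: beta_compatible_def path_graph_def walk_step_def)
qed

theorem lemma8:
  fixes k :: nat and ws :: "letter list" and F :: "int set"
  assumes "k \<ge> 1" and "reduced_word k ws" and "finite F"
  shows "\<exists>G :: (int, edge) lgraph. extension k G \<and>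
           (\<exists>fv fe. embedding (path_graph ws) G fv fe
              \<and> fv ` verts (path_graph ws) \<inter> F = {})
           \<and> finite (edges G - edges G0)"
proof -
  define C where "C = Max (insert 0 F) + int (length ws) + 1"
  define fv where "fv = walk C ws"
  have P: "labeled_on (alphabet k) (path_graph ws)" "well_labeled (path_graph ws)"
    using path_graph_labeled_on[OF assms(2)] path_graph_well_labeled[OF assms(2)] .
  have inj: "inj_on fv (verts (path_graph ws))"
    using walk_inj_on[OF assms(2)] by (simp add: fv_def)
  have avoid: "fv ` verts (path_graph ws) \<inter> F = {}"
  proof -
    have "fv j > Max (insert 0 F)" if "j \<le> length ws" for j
      using walk_ge[of C j ws] that by (simp add: fv_def C_def)
    then show ?thesis
      using Max_ge[of "insert 0 F"] assms(3) by fastforce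
  qed
  have "extension k (attach (path_graph ws) fv)"
    using attach_extension[OF P inj] walk_beta_compatible by (simp add: fv_def)
  moreover note attach_embedding[OF P inj]
  ultimately show ?thesis
    using avoid attach_finite_new_edges[OF finite_path_graph_edges] by blast
qed

end
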